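(* Let $\tau$ be a topology on a set $X$. For each $A \in \tau$ let $d_A : X \times X \to [0,\infty)$ be the characteristic function of the complement of $A\times A$ in $X \times X$, and let $\mathscr{P}_\tau := \{d_A : A \in \tau\}$. Then the topology on $X$ defined by $\mathscr{P}_\tau$, i.e. the topology generated by the family of sets $$U_{d_A,\varepsilon}(x) := \{\xi \in X : d_A(\xi,x) < \varepsilon\}, \quad A \in \tau,\ x \in X,\ \varepsilon \in \mathbb{R},\ \varepsilon > d_A(x,x),$$ coincides with $\tau$.
   Context: A weak pseudo-metric on $X$ is a symmetric map $d: X\times X\to[0,\infty)$ satisfying $d(x_1,x_2)\le d(x_1,x)+d(x,x_2)$ for all $x,x_1,x_2\in X$ and vanishing at at least one point of the diagonal of $X\times X$ (not necessarily on the whole diagonal). For a family $\mathscr{P}$ of such maps, the topology defined by $\mathscr{P}$ is the topology generated (as a subbase) by the sets $U_{d,\varepsilon}(x)=\{\xi\in X: d(\xi,x)<\varepsilon\}$ with $d\in\mathscr{P}$, $x\in X$, and real $\varepsilon>d(x,x)$. *)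

theory Defs
  imports "HOL-Analysis.Analysis"
begin

text \<open>Characteristic function of the complement of A \<times> A (values outside X \<times> X are irrelevant).\<close>
definition char_dist :: "'a set \<Rightarrow> 'a \<Rightarrow> 'a \<Rightarrow> real" where
  "char_dist A x y = (if x \<in> A \<and> y \<in> A then 0 else 1)"

definition wball :: "'a set \<Rightarrow> ('a \<Rightarrow> 'a \<Rightarrow> real) \<Rightarrow> real \<Rightarrow> 'a \<Rightarrow> 'a set" where
  "wball X d \<epsilon> x = {\<xi> \<in> X. d \<xi> x < \<epsilon>}"

text \<open>The topology on X defined by a family P: generated by the sets U_{d,eps}(x)
  as a subbase (X itself added, as the empty finite intersection).\<close>
definition topology_defined_by :: "'a set \<Rightarrow> ('a \<Rightarrow> 'a \<Rightarrow> real) set \<Rightarrow> 'a topology" where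
  "topology_defined_by X P =
     topology_generated_by (insert X {wball X d \<epsilon> x | d \<epsilon> x. d \<in> P \<and> x \<in> X \<and> \<epsilon> > d x x})"

end

theory Submission
  imports Defs
begin

text \<open>A ball of \<open>d\<^sub>A\<close> is \<open>X\<close>, \<open>A \<inter> X\<close> or empty, so every generating set is open in \<open>\<tau>\<close>;
  conversely, a nonempty open set \<open>A\<close> is the ball of \<open>d\<^sub>A\<close> of radius \<open>1/2\<close> about any of its points.\<close>

lemma topology_generated_by_eqI:
  assumes "\<And>U. U \<in> \<S> \<Longrightarrow> openin T U"
    and "\<And>U. openin T U \<Longrightarrow> generate_topology_on \<S> U"
  shows "topology_generated_by \<S> = T"
proof -
  have "generate_topology_on \<S> U \<longleftrightarrow> openin T U" for U
    using generate_topology_on_coarsest[of "openin T"] assms by (blast intro: istopology_openin)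
  then show ?thesis
    by (simp add: topology_eq openin_topology_generated_by_iff)
qed

lemma wball_char_dist:
  "wball X (char_dist A) \<epsilon> x =
     (if 1 < \<epsilon> then X else if 0 < \<epsilon> \<and> x \<in> A then X \<inter> A else {})"
  by (auto simp: wball_def char_dist_def)

lemma openin_wball_char_dist:
  assumes "openin T A"
  shows "openin T (wball (topspace T) (char_dist A) \<epsilon> x)"
  using assms by (auto simp: wball_char_dist)

lemma wball_char_dist_half:
  assumes "x \<in> A" "A \<subseteq> X"
  shows "wball X (char_dist A) (1/2) x = A"
  using assms by (auto simp: wball_char_dist)

theorem theorem4p1:
  fixes T :: "'a topology"
  shows "topology_defined_by (topspace T) {char_dist A | A. openin T A} = T"
  unfolding topology_defined_by_def
proof (rule topology_generated_by_eqI, goal_cases)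
  case (1 U)
  then show ?case
    using openin_wball_char_dist by auto
next
  case (2 U)
  show ?case
  proof (cases "U = {}")
    case True
    then show ?thesis by (simp add: generate_topology_on.Empty)
  next
    case False
    then obtain x where "x \<in> U" by auto
    moreover have "U \<subseteq> topspace T" using \<open>openin T U\<close> by (rule openin_subset)
    ultimately have "U = wball (topspace T) (char_dist U) (1/2) x"
      and "char_dist U x x < 1/2"
      by (auto simp: wball_char_dist_half char_dist_def)
    with \<open>openin T U\<close> \<open>x \<in> U\<close> \<open>U \<subseteq> topspace T\<close> show ?thesis
      by (blast intro: generate_topology_on.Basis)
  qed
qed

end
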